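(* Let $h>0$, $C\neq 0$ and $n\neq 0$ be real constants, and let $F,Z,U:(0,\infty)\to\mathbb{R}$ be smooth with $Z(\phi)\neq 0$ for all $\phi>0$. Consider the ODE for $\phi=\phi(t)>0$, $t>0$, $$2Z(\phi)\Bigl(\phi''+\frac{h}{t}\phi'\Bigr)=C\,t^{-2}F'(\phi)-Z'(\phi)\,\phi'^2-2U'(\phi).$$ This ODE is invariant under the scaling group $(t,\phi)\mapsto(\lambda t,\lambda^n\phi)$, $\lambda>0$ (equivalently, admits the Lie point symmetry $t\partial_t+n\phi\partial_\phi$), if and only if there are constants $Z_0\neq 0$, $m$, $F_1$, $U_1$ such that for all $\phi>0$ $$Z(\phi)=Z_0\phi^{-m},\qquad F'(\phi)=F_1\phi^{1-m},\qquad U'(\phi)=U_1\phi^{\frac{n-2}{n}-m}.$$ Consequently, in the invariant case: if $m\neq 2$ then $F(\phi)=C_1+F_0\phi^{2-m}$ for constants $C_1,F_0$; and if $mn-2n+2\neq 0$ then $U(\phi)=C_2+U_0\phi^{-\frac{mn-2n+2}{n}}$ for constants $C_2,U_0$. For the invariant power-law $\phi=\phi_0 t^n$ one has $Z(\phi)=Z_0\phi_0^{-m}t^{-nm}$.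
   Context: This ODE is the scalar-field equation $2Z\square\phi=F'(\phi)R-Z'(\phi)\phi_{,\alpha}\phi^{,\alpha}-2U'(\phi)$ of the generalized scalar-tensor theory with action $\frac{1}{8\pi}\int\sqrt{-g}\{\frac12[F(\phi)R-Z(\phi)\phi_{,\alpha}\phi^{,\alpha}-2U(\phi)]+\mathcal{L}_M\}$, for a homogeneous field $\phi(t)$ on a self-similar spatially homogeneous background with $H=h/t$ and scalar curvature $R=Ct^{-2}$. An ODE $\phi''=\Phi(t,\phi,\phi')$ is called invariant under the scaling group $(t,\phi)\mapsto(\lambda t,\lambda^n\phi)$ if $\Phi(\lambda t,\lambda^n\phi,\lambda^{n-1}p)=\lambda^{n-2}\Phi(t,\phi,p)$ for all $\lambda>0$, $t>0$, $\phi>0$, $p\in\mathbb{R}$. The time variable may be shifted, $t\to t+t_0$. *)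

theory Defs
  imports "HOL-Analysis.Analysis"
begin

definition smooth_on :: "real set \<Rightarrow> (real \<Rightarrow> real) \<Rightarrow> bool" where
  "smooth_on S f \<longleftrightarrow> (\<forall>k. \<forall>x\<in>S. ((deriv ^^ k) f) differentiable (at x))"

text \<open>Right-hand side Phi(t,phi,p) of the ODE written as phi'' = Phi(t,phi,phi'),
obtained from 2 Z(phi)(phi'' + (h/t) phi') = C t^-2 F'(phi) - Z'(phi) phi'^2 - 2 U'(phi).\<close>
definition ode_rhs ::
  "real \<Rightarrow> real \<Rightarrow> (real \<Rightarrow> real) \<Rightarrow> (real \<Rightarrow> real) \<Rightarrow> (real \<Rightarrow> real)
    \<Rightarrow> real \<Rightarrow> real \<Rightarrow> real \<Rightarrow> real" where
  "ode_rhs h C F Z U t ph p =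
     (C * t powr (-2) * deriv F ph - deriv Z ph * p\<^sup>2 - 2 * deriv U ph) / (2 * Z ph)
     - (h / t) * p"

text \<open>Invariance of phi'' = Phi(t,phi,phi') under (t,phi) \<mapsto> (lambda t, lambda^n phi).\<close>
definition scale_invariant :: "real \<Rightarrow> (real \<Rightarrow> real \<Rightarrow> real \<Rightarrow> real) \<Rightarrow> bool" where
  "scale_invariant n Phi \<longleftrightarrow>
     (\<forall>l>0. \<forall>t>0. \<forall>ph>0. \<forall>p.
        Phi (l * t) (l powr n * ph) (l powr (n - 1) * p) = l powr (n - 2) * Phi t ph p)"

end

theory Submission
  imports Defs
begin

(* Solved for phi'', the equation reads  phi'' = a(phi) t^-2 + b(phi) phi'^2 + c(phi) - (h/t) phi'
   with  a = C F'/(2Z),  b = -Z'/(2Z),  c = -U'/Z.  Substituting (t, phi, p) -> (l t, l^n phi,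
   l^(n-1) p) multiplies the last term by l^(n-2) automatically, and turns the other three into
   a(l^n phi) l^(n-2)/l^n t^-2,  b(l^n phi) l^(n-2) l^n p^2,  c(l^n phi).  Since t^-2, p^2 and 1
   are linearly independent functions of (t, p), invariance is equivalent to the homogeneity
   conditions  a(x) = x a(1),  b(x) = b(1)/x,  c(x) = x^((n-2)/n) c(1)  (choose l = x^(1/n)).

   Then, with elementary calculus on (0, oo) (a function with vanishing derivative
   is constant), the homogeneity of b is the Euler equation x Z' = -m Z, whose solutions are
   Z = Z0 x^-m; the conditions on a and c then say exactly that F' and U' are the stated powers. *)

definition quadratic_rhs ::
  "(real \<Rightarrow> real) \<Rightarrow> (real \<Rightarrow> real) \<Rightarrow> (real \<Rightarrow> real) \<Rightarrow> real \<Rightarrow> real \<Rightarrow> real \<Rightarrow> real \<Rightarrow> real" where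
  "quadratic_rhs a b c h t ph p = a ph * t powr (-2) + b ph * p\<^sup>2 + c ph - h / t * p"

lemma ode_rhs_as_quadratic:
  "ode_rhs h C F Z U =
     quadratic_rhs (\<lambda>ph. C * deriv F ph / (2 * Z ph)) (\<lambda>ph. - deriv Z ph / (2 * Z ph))
                   (\<lambda>ph. - deriv U ph / Z ph) h"
  unfolding ode_rhs_def quadratic_rhs_def fun_eq_iff
  by (simp add: add_divide_distrib diff_divide_distrib)

definition homogeneous_coeffs ::
  "real \<Rightarrow> (real \<Rightarrow> real) \<Rightarrow> (real \<Rightarrow> real) \<Rightarrow> (real \<Rightarrow> real) \<Rightarrow> bool" where
  "homogeneous_coeffs n a b c \<longleftrightarrow>
     (\<forall>x>0. a x = x * a 1 \<and> b x = b 1 / x \<and> c x = x powr ((n - 2) / n) * c 1)"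

lemma quadratic_rhs_scaled:
  fixes l n :: real
  assumes l: "l > 0"
  defines "s \<equiv> l powr n" and "q \<equiv> l powr (n - 2)"
  shows "quadratic_rhs a b c h (l * t) (s * ph) (l powr (n - 1) * p)
       = a (s * ph) * (q / s) * t powr (-2) + b (s * ph) * (q * s) * p\<^sup>2 + c (s * ph)
         - q * (h / t * p)"
proof -
  have "l powr (-2) = l powr ((n - 2) - n)" by simp
  also have "\<dots> = q / s" unfolding q_def s_def by (rule powr_diff)
  finally have inv_sq: "(l * t) powr (-2) = q / s * t powr (-2)"
    by (simp only: powr_mult)
  have "(l powr (n - 1))\<^sup>2 = l powr ((n - 2) + n)"
    by (simp add: power2_eq_square powr_add[symmetric])
  also have "\<dots> = q * s" unfolding q_def s_def by (rule powr_add)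
  finally have sq: "(l powr (n - 1) * p)\<^sup>2 = q * s * p\<^sup>2"
    by (simp add: power_mult_distrib)
  have "l powr (n - 1) = l powr ((n - 2) + 1)" by simp
  also have "\<dots> = q * l" unfolding q_def powr_add using l by simp
  finally have lin: "h / (l * t) * (l powr (n - 1) * p) = q * (h / t * p)"
    using l by simp
  show ?thesis
    unfolding quadratic_rhs_def inv_sq sq lin by simp
qed

lemma monomials_independent:
  fixes \<alpha> \<beta> \<gamma> :: real
  assumes "\<And>t p. t > 0 \<Longrightarrow> \<alpha> * t powr (-2) + \<beta> * p\<^sup>2 + \<gamma> = 0"
  shows "\<alpha> = 0" and "\<beta> = 0" and "\<gamma> = 0"
proof -
  have quarter: "(2::real) powr (-2) = 1 / 4" by (simp add: powr_minus_divide)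
  have "\<alpha> / 4 + \<gamma> = 0" using assms[of 2 0] unfolding quarter by simp
  moreover have "\<alpha> + \<gamma> = 0" and "\<alpha> + \<beta> + \<gamma> = 0" using assms[of 1 0] assms[of 1 1] by simp_all
  ultimately show "\<alpha> = 0" and "\<beta> = 0" and "\<gamma> = 0" by linarith+
qed

lemma scale_invariant_quadratic_iff:
  fixes n :: real
  assumes n: "n \<noteq> 0"
  shows "scale_invariant n (quadratic_rhs a b c h) \<longleftrightarrow> homogeneous_coeffs n a b c"
proof
  assume inv: "scale_invariant n (quadratic_rhs a b c h)"
  show "homogeneous_coeffs n a b c" unfolding homogeneous_coeffs_def
  proof (intro allI impI)
    fix x :: real assume x: "x > 0"
    define l where "l = x powr (1 / n)"
    define q where "q = l powr (n - 2)"
    have l: "l > 0" using x by (simp add: l_def)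
    have ln: "l powr n = x" using x n by (simp add: l_def powr_powr)
    have q: "q > 0" using l by (simp add: q_def)
    have qx: "q = x powr ((n - 2) / n)" using x by (simp add: q_def l_def powr_powr)
    have "(a x / x - a 1) * t powr (-2) + (x * b x - b 1) * p\<^sup>2 + (c x / q - c 1) = 0"
      if t: "t > 0" for t p
    proof -
      have "quadratic_rhs a b c h (l * t) (l powr n * 1) (l powr (n - 1) * p)
          = l powr (n - 2) * quadratic_rhs a b c h t 1 p"
        using inv l t unfolding scale_invariant_def by (meson zero_less_one)
      then have "a x * (q / x) * t powr (-2) + b x * (q * x) * p\<^sup>2 + c x - q * (h / t * p)
          = q * (a 1 * t powr (-2) + b 1 * p\<^sup>2 + c 1 - h / t * p)"
        unfolding quadratic_rhs_scaled[OF l] unfolding ln q_def[symmetric]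
        by (simp add: quadratic_rhs_def)
      then show ?thesis using q x by (simp add: field_simps)
    qed
    from monomials_independent[OF this]
    show "a x = x * a 1 \<and> b x = b 1 / x \<and> c x = x powr ((n - 2) / n) * c 1"
      using x q qx by (simp add: field_simps)
  qed
next
  assume hom: "homogeneous_coeffs n a b c"
  show "scale_invariant n (quadratic_rhs a b c h)" unfolding scale_invariant_def
  proof (intro allI impI)
    fix l t ph p :: real assume l: "l > 0" and t: "t > 0" and ph: "ph > 0"
    define s where "s = l powr n"
    define q where "q = l powr (n - 2)"
    have s: "s > 0" using l by (simp add: s_def)
    have sph: "s * ph > 0" using s ph by simp
    note at_sph = hom[unfolded homogeneous_coeffs_def, rule_format, OF sph]
     and at_ph = hom[unfolded homogeneous_coeffs_def, rule_format, OF ph]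
    have "s powr ((n - 2) / n) = q" using l n by (simp add: s_def q_def powr_powr)
    then have c_scaled: "c (s * ph) = q * c ph"
      using at_sph at_ph s ph by (simp add: powr_mult)
    have a_scaled: "a (s * ph) = s * a ph" using at_sph at_ph by simp
    have b_scaled: "b (s * ph) = b ph / s" using at_sph at_ph ph by simp
    show "quadratic_rhs a b c h (l * t) (l powr n * ph) (l powr (n - 1) * p)
        = l powr (n - 2) * quadratic_rhs a b c h t ph p"
      unfolding quadratic_rhs_scaled[OF l] unfolding s_def[symmetric] q_def[symmetric]
      unfolding a_scaled b_scaled c_scaled quadratic_rhs_def
      using s by (simp add: algebra_simps)
  qed
qed

lemma smooth_on_differentiable:
  "smooth_on S f \<Longrightarrow> x \<in> S \<Longrightarrow> f differentiable (at x)"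
  unfolding smooth_on_def by (metis funpow_0)

lemma constant_on_pos_reals:
  fixes f :: "real \<Rightarrow> real"
  assumes "\<And>x. x > 0 \<Longrightarrow> (f has_real_derivative 0) (at x)" and "x > 0"
  shows "f x = f 1"
  using has_field_derivative_zero_constant[of "{0<..}" f] assms
  by (fastforce intro: has_field_derivative_at_within)

(* Solutions of the Euler equation  x f'(x) = k f(x)  on (0, oo) are the power laws
   f(1) x^k: the quotient f(x) x^-k has derivative zero. *)
lemma euler_equation_solution:
  fixes f :: "real \<Rightarrow> real"
  assumes diff: "\<And>x. x > 0 \<Longrightarrow> f differentiable (at x)"
    and euler: "\<And>x. x > 0 \<Longrightarrow> x * deriv f x = k * f x"
    and x: "x > 0"
  shows "f x = f 1 * x powr k"
proof -
  have "(\<lambda>y. f y * y powr (-k)) x = (\<lambda>y. f y * y powr (-k)) 1"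
  proof (rule constant_on_pos_reals[OF _ x])
    fix y :: real assume y: "y > 0"
    have "((\<lambda>y. f y * y powr (-k)) has_real_derivative
          deriv f y * y powr (-k) + (-k * y powr (-k - 1)) * f y) (at y)"
      using diff[OF y] by (intro DERIV_mult has_real_derivative_powr y)
                          (simp add: DERIV_deriv_iff_real_differentiable)
    moreover have "deriv f y * y powr (-k) + (-k * y powr (-k - 1)) * f y = 0"
      using euler[OF y] y by (simp add: powr_diff field_simps)
    ultimately show "((\<lambda>y. f y * y powr (-k)) has_real_derivative 0) (at y)" by simp
  qed
  then show ?thesis using x by (simp add: powr_minus field_simps)
qed

lemma antiderivative_powr:
  fixes f :: "real \<Rightarrow> real"
  assumes diff: "\<And>x. x > 0 \<Longrightarrow> f differentiable (at x)"
    and deriv_f: "\<And>x. x > 0 \<Longrightarrow> deriv f x = A * x powr (r - 1)" and r: "r \<noteq> 0"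
  shows "\<exists>c a. \<forall>x>0. f x = c + a * x powr r"
proof -
  define g where "g x = f x - A / r * x powr r" for x
  have "(g has_real_derivative 0) (at y)" if y: "y > 0" for y
  proof -
    have "(g has_real_derivative deriv f y - A / r * (r * y powr (r - 1))) (at y)"
      unfolding g_def using diff[OF y] has_real_derivative_powr[OF y, of r]
      by (intro DERIV_diff DERIV_cmult) (simp_all add: DERIV_deriv_iff_real_differentiable)
    then show ?thesis using deriv_f[OF y] r by simp
  qed
  then have "\<forall>x>0. f x = g 1 + A / r * x powr r"
    using constant_on_pos_reals unfolding g_def by fastforce
  then show ?thesis by blast
qed

lemma deriv_power_law:
  fixes f :: "real \<Rightarrow> real"
  assumes "\<forall>y>0. f y = A * y powr r" and x: "x > 0"
  shows "deriv f x = A * r * x powr (r - 1)"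
proof -
  have "eventually (\<lambda>y. f y = A * y powr r) (nhds x)"
    using eventually_nhds_in_open[of "{0<..}" x] x assms(1) by (auto elim!: eventually_mono)
  then have "deriv f x = deriv (\<lambda>y. A * y powr r) x" by (rule deriv_cong_ev) simp
  also have "\<dots> = A * r * x powr (r - 1)"
    by (rule DERIV_imp_deriv)
       (use DERIV_cmult[OF has_real_derivative_powr[OF x, of r], of A] in \<open>simp add: mult.assoc\<close>)
  finally show ?thesis .
qed

definition power_law_potentials ::
  "real \<Rightarrow> (real \<Rightarrow> real) \<Rightarrow> (real \<Rightarrow> real) \<Rightarrow> (real \<Rightarrow> real)
    \<Rightarrow> real \<Rightarrow> real \<Rightarrow> real \<Rightarrow> real \<Rightarrow> bool" where
  "power_law_potentials n Z F U Z0 m F1 U1 \<longleftrightarrow> Z0 \<noteq> 0 \<and>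
     (\<forall>ph>0. Z ph = Z0 * ph powr (-m)
           \<and> deriv F ph = F1 * ph powr (1 - m)
           \<and> deriv U ph = U1 * ph powr ((n - 2) / n - m))"

lemma homogeneous_coeffsI:
  assumes "\<And>x. x > 0 \<Longrightarrow> a x = A * x \<and> b x = B / x \<and> c x = K * x powr ((n - 2) / n)"
  shows "homogeneous_coeffs n a b c"
  using assms[of 1] assms unfolding homogeneous_coeffs_def by simp

(* Homogeneous coefficients force power laws: the condition on b is the Euler equation
   x Z' = -m Z, and the conditions on a and c then express F' and U' through Z. *)
lemma power_laws_from_homogeneous_coeffs:
  fixes F Z U :: "real \<Rightarrow> real"
  assumes C: "C \<noteq> 0" and Z_nz: "\<And>x. x > 0 \<Longrightarrow> Z x \<noteq> 0"
    and Z_diff: "\<And>x. x > 0 \<Longrightarrow> Z differentiable (at x)"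
    and hom: "homogeneous_coeffs n (\<lambda>ph. C * deriv F ph / (2 * Z ph))
                (\<lambda>ph. - deriv Z ph / (2 * Z ph)) (\<lambda>ph. - deriv U ph / Z ph)"
  shows "\<exists>Z0 m F1 U1. power_law_potentials n Z F U Z0 m F1 U1"
proof -
  define m where "m = - deriv Z 1 / Z 1"
  note at = hom[unfolded homogeneous_coeffs_def, rule_format]
  have Z1: "Z 1 \<noteq> 0" using Z_nz by simp
  have Z_power: "Z x = Z 1 * x powr (-m)" if x: "x > 0" for x
  proof (rule euler_equation_solution[OF Z_diff _ x])
    fix y :: real assume y: "y > 0"
    have "- deriv Z y / (2 * Z y) = - deriv Z 1 / (2 * Z 1) / y" using at[OF y] by blast
    with Z_nz[OF y] Z1 y show "y * deriv Z y = - m * Z y"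
      unfolding m_def by (simp add: field_simps)
  qed
  have "deriv F x = deriv F 1 * x powr (1 - m)
      \<and> deriv U x = deriv U 1 * x powr ((n - 2) / n - m)" if x: "x > 0" for x
  proof
    define Q where "Q = x powr (-m)"
    define E where "E = x powr ((n - 2) / n)"
    have Q: "Q > 0" using x by (simp add: Q_def)
    have "x powr (1 - m) = x * Q" and "x powr ((n - 2) / n - m) = E * Q"
      using x by (simp_all add: Q_def E_def powr_diff powr_minus_divide)
    moreover have Zx: "Z x = Z 1 * Q" using Z_power[OF x] by (simp add: Q_def)
    moreover have "C * deriv F x / (2 * (Z 1 * Q)) = x * (C * deriv F 1 / (2 * Z 1))"
      using at[OF x] unfolding Zx by blast
    then have "deriv F x = deriv F 1 * (x * Q)"
      using C Z1 Q by (simp add: field_simps)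
    moreover have "- deriv U x / (Z 1 * Q) = E * (- deriv U 1 / Z 1)"
      using at[OF x] unfolding Zx E_def by blast
    then have "deriv U x = deriv U 1 * (E * Q)"
      using Z1 Q by (simp add: field_simps)
    ultimately show "deriv F x = deriv F 1 * x powr (1 - m)"
      and "deriv U x = deriv U 1 * x powr ((n - 2) / n - m)" by simp_all
  qed
  then have "power_law_potentials n Z F U (Z 1) m (deriv F 1) (deriv U 1)"
    using Z_power Z1 unfolding power_law_potentials_def by blast
  then show ?thesis by blast
qed

lemma homogeneous_coeffs_from_power_laws:
  fixes F Z U :: "real \<Rightarrow> real"
  assumes "power_law_potentials n Z F U Z0 m F1 U1"
  shows "homogeneous_coeffs n (\<lambda>ph. C * deriv F ph / (2 * Z ph))
           (\<lambda>ph. - deriv Z ph / (2 * Z ph)) (\<lambda>ph. - deriv U ph / Z ph)"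
proof (rule homogeneous_coeffsI)
  fix x :: real assume x: "x > 0"
  define P where "P = x powr (-m)"
  define E where "E = x powr ((n - 2) / n)"
  have P: "P > 0" using x by (simp add: P_def)
  have Z0: "Z0 \<noteq> 0" and laws: "\<forall>ph>0. Z ph = Z0 * ph powr (-m)
           \<and> deriv F ph = F1 * ph powr (1 - m) \<and> deriv U ph = U1 * ph powr ((n - 2) / n - m)"
    using assms unfolding power_law_potentials_def by blast+
  have "x powr (1 - m) = x * P" and "x powr ((n - 2) / n - m) = E * P"
    using x by (simp_all add: P_def E_def powr_diff powr_minus_divide)
  then have Zx: "Z x = Z0 * P" and Fx: "deriv F x = F1 * (x * P)" and Ux: "deriv U x = U1 * (E * P)"
    using laws x unfolding P_def by auto
  have "deriv Z x = Z0 * (-m) * x powr (-m - 1)"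
    by (rule deriv_power_law) (use laws x in auto)
  also have "x powr (-m - 1) = P / x" using x by (simp add: P_def powr_diff)
  finally have dZx: "deriv Z x = Z0 * (-m) * (P / x)" .
  show "C * deriv F x / (2 * Z x) = (C * F1 / (2 * Z0)) * x
      \<and> - deriv Z x / (2 * Z x) = (m / 2) / x
      \<and> - deriv U x / Z x = (- U1 / Z0) * E"
  proof (intro conjI)
    show "C * deriv F x / (2 * Z x) = (C * F1 / (2 * Z0)) * x"
      unfolding Zx Fx using Z0 P by (simp add: field_simps)
    show "- deriv Z x / (2 * Z x) = (m / 2) / x"
      unfolding Zx dZx using Z0 P x by (simp add: field_simps)
    show "- deriv U x / Z x = (- U1 / Z0) * E"
      unfolding Zx Ux using Z0 P by (simp add: field_simps)
  qed
qed

lemma scale_invariant_iff_power_laws: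
  fixes F Z U :: "real \<Rightarrow> real"
  assumes C: "C \<noteq> 0" and n: "n \<noteq> 0" and Z_nz: "\<And>x. x > 0 \<Longrightarrow> Z x \<noteq> 0"
    and Z_diff: "\<And>x. x > 0 \<Longrightarrow> Z differentiable (at x)"
  shows "scale_invariant n (ode_rhs h C F Z U) \<longleftrightarrow>
           (\<exists>Z0 m F1 U1. power_law_potentials n Z F U Z0 m F1 U1)"
proof -
  have "scale_invariant n (ode_rhs h C F Z U) \<longleftrightarrow>
      homogeneous_coeffs n (\<lambda>ph. C * deriv F ph / (2 * Z ph))
        (\<lambda>ph. - deriv Z ph / (2 * Z ph)) (\<lambda>ph. - deriv U ph / Z ph)"
    unfolding ode_rhs_as_quadratic using n by (rule scale_invariant_quadratic_iff)
  also have "\<dots> \<longleftrightarrow> (\<exists>Z0 m F1 U1. power_law_potentials n Z F U Z0 m F1 U1)"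
    using power_laws_from_homogeneous_coeffs[OF C Z_nz Z_diff] homogeneous_coeffs_from_power_laws
    by blast
  finally show ?thesis .
qed

lemma power_law_along_orbit:
  fixes Z :: "real \<Rightarrow> real"
  assumes "\<forall>ph>0. Z ph = Z0 * ph powr (-m)" and "ph0 > 0" and "t > 0"
  shows "Z (ph0 * t powr n) = Z0 * ph0 powr (-m) * t powr (- n * m)"
  using assms by (simp add: powr_mult powr_powr)

theorem mainTheorem2:
  fixes h C n :: real and F Z U :: "real \<Rightarrow> real"
  assumes "h > 0" and "C \<noteq> 0" and "n \<noteq> 0"
    and "smooth_on {0<..} F" and "smooth_on {0<..} Z" and "smooth_on {0<..} U"
    and "\<forall>ph>0. Z ph \<noteq> 0"
  shows "(scale_invariant n (ode_rhs h C F Z U) \<longleftrightarrow>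
           (\<exists>Z0 m F1 U1. Z0 \<noteq> 0 \<and>
              (\<forall>ph>0. Z ph = Z0 * ph powr (-m)
                    \<and> deriv F ph = F1 * ph powr (1 - m)
                    \<and> deriv U ph = U1 * ph powr ((n - 2) / n - m))))
       \<and> (\<forall>Z0 m F1 U1. Z0 \<noteq> 0 \<and>
              (\<forall>ph>0. Z ph = Z0 * ph powr (-m)
                    \<and> deriv F ph = F1 * ph powr (1 - m)
                    \<and> deriv U ph = U1 * ph powr ((n - 2) / n - m)) \<longrightarrow>
            (m \<noteq> 2 \<longrightarrow> (\<exists>C1 F0. \<forall>ph>0. F ph = C1 + F0 * ph powr (2 - m)))
          \<and> (m * n - 2 * n + 2 \<noteq> 0 \<longrightarrow>
               (\<exists>C2 U0. \<forall>ph>0. U ph = C2 + U0 * ph powr (- (m * n - 2 * n + 2) / n)))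
          \<and> (\<forall>ph0>0. \<forall>t>0. Z (ph0 * t powr n) = Z0 * ph0 powr (-m) * t powr (- n * m)))"
proof (intro conjI allI impI)
  have Z_diff: "Z differentiable (at x)" if "x > 0" for x
    using smooth_on_differentiable assms(5) that by simp
  show "scale_invariant n (ode_rhs h C F Z U) \<longleftrightarrow> (\<exists>Z0 m F1 U1. Z0 \<noteq> 0 \<and>
      (\<forall>ph>0. Z ph = Z0 * ph powr (-m) \<and> deriv F ph = F1 * ph powr (1 - m)
            \<and> deriv U ph = U1 * ph powr ((n - 2) / n - m)))"
    using scale_invariant_iff_power_laws[OF assms(2,3)] assms(7) Z_diff
    unfolding power_law_potentials_def by blast
next
  fix Z0 m F1 U1 :: real
  assume laws: "Z0 \<noteq> 0 \<and> (\<forall>ph>0. Z ph = Z0 * ph powr (-m)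
      \<and> deriv F ph = F1 * ph powr (1 - m) \<and> deriv U ph = U1 * ph powr ((n - 2) / n - m))"
  have F_diff: "F differentiable (at x)" and U_diff: "U differentiable (at x)" if "x > 0" for x
    using smooth_on_differentiable assms(4,6) that by simp_all
  show "\<exists>C1 F0. \<forall>ph>0. F ph = C1 + F0 * ph powr (2 - m)" if "m \<noteq> 2"
    using antiderivative_powr[of F F1 "2 - m"] F_diff laws that by (simp add: diff_diff_eq2)
  show "\<exists>C2 U0. \<forall>ph>0. U ph = C2 + U0 * ph powr (- (m * n - 2 * n + 2) / n)"
    if "m * n - 2 * n + 2 \<noteq> 0"
  proof (rule antiderivative_powr[OF U_diff])
    show "- (m * n - 2 * n + 2) / n \<noteq> 0" using that assms(3) by simp
    have "- (m * n - 2 * n + 2) / n - 1 = (n - 2) / n - m" using assms(3) by (simp add: field_simps)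
    then show "\<And>x. x > 0 \<Longrightarrow> deriv U x = U1 * x powr (- (m * n - 2 * n + 2) / n - 1)"
      using laws by simp
  qed
  show "Z (ph0 * t powr n) = Z0 * ph0 powr (-m) * t powr (- n * m)" if "ph0 > 0" "t > 0" for ph0 t
    using power_law_along_orbit[of Z Z0 m] laws that by blast
qed

end
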